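(* Let $(G,\oplus)$ be a gyrogroup with identity $e$, and let $s\in G$ with $s\neq e$ and $s=\ominus s$. Then the L-Cayley graph $\mathrm{LCay}(G,\{s\})$ is vertex-transitive.
   Context: A gyrogroup is a nonempty set $G$ with a binary operation $\oplus$ such that: (i) there is a unique $e\in G$ with $e\oplus x=x=x\oplus e$ for all $x$; (ii) each $x\in G$ has a unique inverse $\ominus x$ with $\ominus x\oplus x=e=x\oplus(\ominus x)$; (iii) for all $x,y\in G$ there is an automorphism $\mathrm{gyr}[x,y]$ of $(G,\oplus)$ with $x\oplus(y\oplus z)=(x\oplus y)\oplus \mathrm{gyr}[x,y](z)$ for all $z\in G$; (iv) $\mathrm{gyr}[x\oplus y,y]=\mathrm{gyr}[x,y]$ for all $x,y$. For a subset $S\subseteq G$ with $e\notin S$, the L-Cayley graph $\mathrm{LCay}(G,S)$ is the directed graph with vertex set $G$ and a directed edge $u\to v$ iff $v=s\oplus u$ for some $s\in S$. A (directed) graph is (vertex-)transitive if for any two vertices $u,v$ there is a graph automorphism (a bijection of vertices preserving directed edges in both directions) sending $u$ to $v$. *)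

theory Defs
  imports Main
begin

definition gyro_aut :: "'a set \<Rightarrow> ('a \<Rightarrow> 'a \<Rightarrow> 'a) \<Rightarrow> ('a \<Rightarrow> 'a) \<Rightarrow> bool" where
  "gyro_aut G op f \<longleftrightarrow> bij_betw f G G \<and> (\<forall>a\<in>G. \<forall>b\<in>G. f (op a b) = op (f a) (f b))"

definition gyro_id :: "'a set \<Rightarrow> ('a \<Rightarrow> 'a \<Rightarrow> 'a) \<Rightarrow> 'a" where
  "gyro_id G op = (THE e. e \<in> G \<and> (\<forall>x\<in>G. op e x = x \<and> op x e = x))"

definition gyro_inv :: "'a set \<Rightarrow> ('a \<Rightarrow> 'a \<Rightarrow> 'a) \<Rightarrow> 'a \<Rightarrow> 'a" where
  "gyro_inv G op x = (THE y. y \<in> G \<and> op y x = gyro_id G op \<and> op x y = gyro_id G op)"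

definition gyrogroup_with :: "'a set \<Rightarrow> ('a \<Rightarrow> 'a \<Rightarrow> 'a) \<Rightarrow> ('a \<Rightarrow> 'a \<Rightarrow> 'a \<Rightarrow> 'a) \<Rightarrow> bool" where
  "gyrogroup_with G op gyr \<longleftrightarrow>
     G \<noteq> {} \<and>
     (\<forall>x\<in>G. \<forall>y\<in>G. op x y \<in> G) \<and>
     (\<exists>!e. e \<in> G \<and> (\<forall>x\<in>G. op e x = x \<and> op x e = x)) \<and>
     (\<forall>x\<in>G. \<exists>!y. y \<in> G \<and> op y x = gyro_id G op \<and> op x y = gyro_id G op) \<and>
     (\<forall>x\<in>G. \<forall>y\<in>G. gyro_aut G op (gyr x y) \<and>
        (\<forall>z\<in>G. op x (op y z) = op (op x y) (gyr x y z))) \<and>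
     (\<forall>x\<in>G. \<forall>y\<in>G. \<forall>z\<in>G. gyr (op x y) y z = gyr x y z)"

definition gyrogroup :: "'a set \<Rightarrow> ('a \<Rightarrow> 'a \<Rightarrow> 'a) \<Rightarrow> bool" where
  "gyrogroup G op \<longleftrightarrow> (\<exists>gyr. gyrogroup_with G op gyr)"

definition lcay_edge :: "'a set \<Rightarrow> ('a \<Rightarrow> 'a \<Rightarrow> 'a) \<Rightarrow> 'a set \<Rightarrow> 'a \<Rightarrow> 'a \<Rightarrow> bool" where
  "lcay_edge G op S u v \<longleftrightarrow> u \<in> G \<and> v \<in> G \<and> (\<exists>s\<in>S. v = op s u)"

definition digraph_vertex_transitive :: "'a set \<Rightarrow> ('a \<Rightarrow> 'a \<Rightarrow> bool) \<Rightarrow> bool" where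
  "digraph_vertex_transitive V E \<longleftrightarrow>
     (\<forall>u\<in>V. \<forall>v\<in>V. \<exists>f. bij_betw f V V \<and>
        (\<forall>a\<in>V. \<forall>b\<in>V. E a b \<longleftrightarrow> E (f a) (f b)) \<and> f u = v)"

end

theory Submission
  imports Defs
begin

text \<open>Left translation by a self-inverse \<open>s \<noteq> e\<close> is a fixed-point-free involution of \<open>G\<close>, and
  every edge of \<open>LCay(G,{s})\<close> goes from a vertex to its image under that involution. Given
  vertices \<open>u, v\<close>, the involution swapping \<open>u \<leftrightarrow> v\<close> and \<open>s\<oplus>u \<leftrightarrow> s\<oplus>v\<close> and fixing everything
  else commutes with the translation, hence is a graph automorphism sending \<open>u\<close> to \<open>v\<close>.\<close>

lemma commuting_involution_preserves_edges:
  assumes TG: "\<And>x. x \<in> G \<Longrightarrow> T x \<in> G"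
    and E: "\<And>a b. E a b \<longleftrightarrow> a \<in> G \<and> b \<in> G \<and> b = T a"
    and f: "\<And>x. x \<in> G \<Longrightarrow> f x \<in> G \<and> f (f x) = x \<and> f (T x) = T (f x)"
  shows "bij_betw f G G" and "\<forall>a\<in>G. \<forall>b\<in>G. E a b \<longleftrightarrow> E (f a) (f b)"
proof -
  show "bij_betw f G G"
    by (rule bij_betw_byWitness[where f' = f]) (use f in auto)
  show "\<forall>a\<in>G. \<forall>b\<in>G. E a b \<longleftrightarrow> E (f a) (f b)"
  proof (intro ballI)
    fix a b assume a: "a \<in> G" and b: "b \<in> G"
    have "b = T a \<longleftrightarrow> f b = T (f a)"
      using f a b TG by metis
    then show "E a b \<longleftrightarrow> E (f a) (f b)"
      using E a b f by auto
  qed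
qed

lemma fixed_point_free_involution_commuting_swap:
  assumes TG: "\<And>x. x \<in> G \<Longrightarrow> T x \<in> G"
    and TT: "\<And>x. x \<in> G \<Longrightarrow> T (T x) = x"
    and T_neq: "\<And>x. x \<in> G \<Longrightarrow> T x \<noteq> x"
    and u: "u \<in> G" and v: "v \<in> G"
  obtains f where "\<And>x. x \<in> G \<Longrightarrow> f x \<in> G \<and> f (f x) = x \<and> f (T x) = T (f x)" and "f u = v"
proof (cases "v = u \<or> v = T u")
  case True
  then show ?thesis
    using that[of id] that[of T] TG TT by auto
next
  case False
  have distinct: "u \<noteq> T v" "T u \<noteq> T v" "u \<noteq> T u" "v \<noteq> T v"
    using False TT T_neq u v by metis+
  define f where "f x = (if x = u then v else if x = v then u else if x = T u then T v
                         else if x = T v then T u else x)" for x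
  have "f x \<in> G \<and> f (f x) = x \<and> f (T x) = T (f x)" if x: "x \<in> G" for x
  proof -
    have "T x = u \<longleftrightarrow> x = T u" "T x = v \<longleftrightarrow> x = T v"
      "T x = T u \<longleftrightarrow> x = u" "T x = T v \<longleftrightarrow> x = v"
      using TT x u v by metis+
    then show ?thesis
      unfolding f_def using distinct False TT TG u v x by auto
  qed
  then show ?thesis
    using that[of f] by (simp add: f_def)
qed

lemma vertex_transitive_if_fixed_point_free_involution:
  assumes TG: "\<And>x. x \<in> G \<Longrightarrow> T x \<in> G"
    and TT: "\<And>x. x \<in> G \<Longrightarrow> T (T x) = x"
    and T_neq: "\<And>x. x \<in> G \<Longrightarrow> T x \<noteq> x"
    and E: "\<And>a b. E a b \<longleftrightarrow> a \<in> G \<and> b \<in> G \<and> b = T a"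
  shows "digraph_vertex_transitive G E"
  unfolding digraph_vertex_transitive_def
proof (intro ballI)
  fix u v assume "u \<in> G" "v \<in> G"
  then obtain f where f: "\<And>x. x \<in> G \<Longrightarrow> f x \<in> G \<and> f (f x) = x \<and> f (T x) = T (f x)"
    and "f u = v"
    using fixed_point_free_involution_commuting_swap[OF TG TT T_neq] by blast
  with commuting_involution_preserves_edges[OF TG E f]
  show "\<exists>f. bij_betw f G G \<and> (\<forall>a\<in>G. \<forall>b\<in>G. E a b = E (f a) (f b)) \<and> f u = v"
    by blast
qed

locale gyrogroup_gyr =
  fixes G :: "'a set" and op :: "'a \<Rightarrow> 'a \<Rightarrow> 'a" and gyr :: "'a \<Rightarrow> 'a \<Rightarrow> 'a \<Rightarrow> 'a"
  assumes closed: "x \<in> G \<Longrightarrow> y \<in> G \<Longrightarrow> op x y \<in> G"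
    and identity_unique: "\<exists>!e. e \<in> G \<and> (\<forall>x\<in>G. op e x = x \<and> op x e = x)"
    and inverse_unique:
      "x \<in> G \<Longrightarrow> \<exists>!y. y \<in> G \<and> op y x = gyro_id G op \<and> op x y = gyro_id G op"
    and gyr_aut: "x \<in> G \<Longrightarrow> y \<in> G \<Longrightarrow> gyro_aut G op (gyr x y)"
    and left_gyroassoc:
      "x \<in> G \<Longrightarrow> y \<in> G \<Longrightarrow> z \<in> G \<Longrightarrow> op x (op y z) = op (op x y) (gyr x y z)"
    and left_loop: "x \<in> G \<Longrightarrow> y \<in> G \<Longrightarrow> z \<in> G \<Longrightarrow> gyr (op x y) y z = gyr x y z"

lemma gyrogroup_gyr_if_gyrogroup_with:
  assumes "gyrogroup_with G op gyr"
  shows "gyrogroup_gyr G op gyr"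
proof -
  note axioms = assms[unfolded gyrogroup_with_def]
  show ?thesis
    by unfold_locales (use axioms in \<open>simp_all\<close>)
qed

context gyrogroup_gyr
begin

abbreviation e :: 'a where "e \<equiv> gyro_id G op"

lemma id_closed: "e \<in> G"
  and left_id: "x \<in> G \<Longrightarrow> op e x = x"
  and right_id: "x \<in> G \<Longrightarrow> op x e = x"
  using theI'[OF identity_unique] unfolding gyro_id_def by blast+

lemma inv_closed: "x \<in> G \<Longrightarrow> gyro_inv G op x \<in> G"
  and left_inv: "x \<in> G \<Longrightarrow> op (gyro_inv G op x) x = e"
  and right_inv: "x \<in> G \<Longrightarrow> op x (gyro_inv G op x) = e"
  using theI'[OF inverse_unique] unfolding gyro_inv_def by blast+

lemma gyr_closed: "x \<in> G \<Longrightarrow> y \<in> G \<Longrightarrow> z \<in> G \<Longrightarrow> gyr x y z \<in> G"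
  using gyr_aut unfolding gyro_aut_def bij_betw_def by blast

lemma gyr_inj: "x \<in> G \<Longrightarrow> y \<in> G \<Longrightarrow> z \<in> G \<Longrightarrow> w \<in> G \<Longrightarrow> gyr x y z = gyr x y w \<Longrightarrow> z = w"
  using gyr_aut unfolding gyro_aut_def bij_betw_def inj_on_def by blast

lemma left_cancel:
  assumes a: "a \<in> G" and b: "b \<in> G" and c: "c \<in> G" and eq: "op a b = op a c"
  shows "b = c"
proof -
  let ?a' = "gyro_inv G op a"
  have inv_a_cancel: "op ?a' (op a z) = gyr ?a' a z" if "z \<in> G" for z
    using left_gyroassoc[OF inv_closed[OF a] a that] left_inv[OF a]
      left_id[OF gyr_closed[OF inv_closed[OF a] a that]] by simp
  have "gyr ?a' a b = gyr ?a' a c"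
    using inv_a_cancel[OF b] inv_a_cancel[OF c] eq by simp
  then show ?thesis
    using gyr_inj[OF inv_closed[OF a] a b c] by simp
qed

lemma gyr_id_left:
  assumes a: "a \<in> G" and z: "z \<in> G"
  shows "gyr e a z = z"
proof -
  have "op a z = op a (gyr e a z)"
    using left_gyroassoc[OF id_closed a z] left_id[OF closed[OF a z]] left_id[OF a] by simp
  then show ?thesis
    using left_cancel[OF a z gyr_closed[OF id_closed a z]] by simp
qed

lemma gyr_self: "a \<in> G \<Longrightarrow> z \<in> G \<Longrightarrow> gyr a a z = z"
  using left_loop[OF id_closed, of a z] left_id gyr_id_left by simp

lemma left_translation_fixed_point:
  assumes s: "s \<in> G" and x: "x \<in> G" and fixed: "op s x = x"
  shows "s = e"
proof -
  let ?x' = "gyro_inv G op x"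
  have "gyr s x ?x' = ?x'"
    using left_loop[OF s x inv_closed[OF x]] fixed gyr_self[OF x inv_closed[OF x]] by simp
  then have "op s e = e"
    using left_gyroassoc[OF s x inv_closed[OF x]] fixed right_inv[OF x] by simp
  then show ?thesis
    using right_id[OF s] by simp
qed

text \<open>With \<open>s \<oplus> s = e\<close>, left gyroassociativity gives \<open>s \<oplus> (s \<oplus> x) = gyr[s,s] x\<close>, and
  \<open>gyr[s,s]\<close> is trivial by the left loop property.\<close>

lemma self_inverse_translation_involutive:
  assumes s: "s \<in> G" and self_inv: "gyro_inv G op s = s" and x: "x \<in> G"
  shows "op s (op s x) = x"
  using left_gyroassoc[OF s s x] gyr_self[OF s x] right_inv[OF s] self_inv left_id[OF x] by simp

end

theorem mainTheorem1:
  fixes G :: "'a set" and op :: "'a \<Rightarrow> 'a \<Rightarrow> 'a" and s :: 'a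
  assumes "gyrogroup G op"
    and "s \<in> G"
    and "s \<noteq> gyro_id G op"
    and "s = gyro_inv G op s"
  shows "digraph_vertex_transitive G (lcay_edge G op {s})"
proof -
  obtain gyr where "gyrogroup_with G op gyr"
    using assms(1) unfolding gyrogroup_def by blast
  then interpret gyrogroup_gyr G op gyr
    by (rule gyrogroup_gyr_if_gyrogroup_with)
  show ?thesis
  proof (rule vertex_transitive_if_fixed_point_free_involution[where T = "op s"])
    show "\<And>x. x \<in> G \<Longrightarrow> op s x \<in> G"
      using closed assms(2) by blast
    show "\<And>x. x \<in> G \<Longrightarrow> op s (op s x) = x"
      using self_inverse_translation_involutive assms(2,4) by simp
    show "\<And>x. x \<in> G \<Longrightarrow> op s x \<noteq> x"
      using left_translation_fixed_point assms(2,3) by blast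
    show "\<And>a b. lcay_edge G op {s} a b \<longleftrightarrow> a \<in> G \<and> b \<in> G \<and> b = op s a"
      by (simp add: lcay_edge_def)
  qed
qed

end
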